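(* Let $n\ge3$. For $k\ge0$ let $c_k$ be the number of elements of $K^{\infty}_n$ of length $k$, and for $k\ge1$, $1\le i\le n$, let $c_{k;i}$ be the number of elements of length $k$ whose canonical form begins with $y_i$. Then $c_0=1$, $c_{1;i}=1$ for all $i$, $c_k=\sum_{i=1}^n c_{k;i}$ for $k\ge1$, and for $k\ge2$: $$c_{k;j}=\sum_{i=\max(1,j-1)}^{n} c_{k-1;i}\quad (j\ne n),\qquad c_{k;n}=\sum_{i=n-2}^{n}c_{k-1;i}.$$
   Context: $K^{\infty}_n=\langle y_1,\dots,y_n\mid y_iy_j=y_jy_i\ (j+2\le i\le n-1),\ y_ny_k=y_ky_n\ (1\le k\le n-3)\rangle$. The canonical form of an element is its smallest representative word in length-lexicographic order with $y_1<\cdots<y_n$. *)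

theory Defs
  imports Main
begin

text \<open>Generators y_1..y_n are encoded as natural numbers 1..n; words are lists.
  K^infty_n is the monoid given by the presentation (all relations are commutations).\<close>

definition commutes :: "nat \<Rightarrow> nat \<Rightarrow> nat \<Rightarrow> bool" where
  "commutes n a b \<longleftrightarrow> a \<in> {1..n} \<and> b \<in> {1..n} \<and>
     ((a \<le> n - 1 \<and> b \<le> n - 1 \<and> (a + 2 \<le> b \<or> b + 2 \<le> a))
      \<or> (a = n \<and> b \<le> n - 3) \<or> (b = n \<and> a \<le> n - 3))"

definition swap_step :: "nat \<Rightarrow> nat list \<Rightarrow> nat list \<Rightarrow> bool" where
  "swap_step n u v \<longleftrightarrow> (\<exists>xs ys a b. commutes n a b \<and> u = xs @ [a, b] @ ys \<and> v = xs @ [b, a] @ ys)"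

definition word_eq :: "nat \<Rightarrow> (nat list \<times> nat list) set" where
  "word_eq n = {(u, v). (swap_step n)\<^sup>*\<^sup>* u v}"

definition words_of_len :: "nat \<Rightarrow> nat \<Rightarrow> nat list set" where
  "words_of_len n k = {w. set w \<subseteq> {1..n} \<and> length w = k}"

definition elems_of_len :: "nat \<Rightarrow> nat \<Rightarrow> nat list set set" where
  "elems_of_len n k = words_of_len n k // word_eq n"

definition canon :: "nat list set \<Rightarrow> nat list" where
  "canon C = (THE w. w \<in> C \<and> (\<forall>v \<in> C. v \<noteq> w \<longrightarrow> (w, v) \<in> lenlex less_than))"

definition cnt :: "nat \<Rightarrow> nat \<Rightarrow> nat" where
  "cnt n k = card (elems_of_len n k)"

definition cnt_start :: "nat \<Rightarrow> nat \<Rightarrow> nat \<Rightarrow> nat" where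
  "cnt_start n k i = card {C \<in> elems_of_len n k. canon C \<noteq> [] \<and> hd (canon C) = i}"

end

theory Submission
  imports Defs "HOL-Library.Confluence"
begin

text \<open>Orient every defining relation as \<open>y\<^sub>a y\<^sub>b \<rightarrow> y\<^sub>b y\<^sub>a\<close> for \<open>b < a\<close>. Each step decreases a
  word in length-lexicographic order, so rewriting terminates, and it is locally confluent: the
  only overlap is a factor \<open>y\<^sub>c y\<^sub>b y\<^sub>a\<close> with \<open>a < b < c\<close>, and when \<open>y\<^sub>c, y\<^sub>b\<close> and \<open>y\<^sub>b, y\<^sub>a\<close> commute
  so do \<open>y\<^sub>c, y\<^sub>a\<close>, which lets both sides be sorted to \<open>y\<^sub>a y\<^sub>b y\<^sub>c\<close>. By Newman's lemma every
  element has a unique irreducible representative, which is therefore its canonical form.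
  Hence canonical forms are the words without a factor \<open>y\<^sub>a y\<^sub>b\<close> with \<open>b < a\<close> and \<open>y\<^sub>a y\<^sub>b = y\<^sub>b y\<^sub>a\<close>,
  and counting them by their first letter gives the recursion: \<open>y\<^sub>j\<close> may be followed by \<open>y\<^sub>i\<close>
  exactly when \<open>i \<ge> j - 1\<close> (for \<open>j < n\<close>), resp. \<open>i \<ge> n - 2\<close> (for \<open>j = n\<close>).\<close>

lemma newman:
  assumes wf: "wfP r\<inverse>\<inverse>"
    and local_confluent: "\<And>x y z. r x y \<Longrightarrow> r x z \<Longrightarrow> \<exists>u. r\<^sup>*\<^sup>* y u \<and> r\<^sup>*\<^sup>* z u"
  shows "confluentp r"
proof (rule confluentpI)
  fix x y z
  assume "r\<^sup>*\<^sup>* x y" "r\<^sup>*\<^sup>* x z"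
  then show "\<exists>u. r\<^sup>*\<^sup>* y u \<and> r\<^sup>*\<^sup>* z u"
  proof (induction x arbitrary: y z rule: wfp_induct_rule[OF wf])
    case (1 x)
    show ?case
    proof (cases "x = y \<or> x = z")
      case True
      then show ?thesis using "1.prems" by blast
    next
      case False
      then obtain y1 z1 where y1: "r x y1" "r\<^sup>*\<^sup>* y1 y" and z1: "r x z1" "r\<^sup>*\<^sup>* z1 z"
        using "1.prems" by (metis converse_rtranclpE)
      obtain u where u: "r\<^sup>*\<^sup>* y1 u" "r\<^sup>*\<^sup>* z1 u"
        using local_confluent[OF y1(1) z1(1)] by blast
      obtain v where v: "r\<^sup>*\<^sup>* y v" "r\<^sup>*\<^sup>* u v"
        using "1.IH"[OF _ y1(2) u(1)] y1(1) by auto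
      obtain w where w: "r\<^sup>*\<^sup>* z w" "r\<^sup>*\<^sup>* v w"
        using "1.IH"[OF _ z1(2) rtranclp_trans[OF u(2) v(2)]] z1(1) by auto
      show ?thesis using v(1) w by (meson rtranclp_trans)
    qed
  qed
qed

definition swap_adj :: "nat \<Rightarrow> 'a list \<Rightarrow> 'a list" where
  "swap_adj i u = u[i := u ! Suc i, Suc i := u ! i]"

lemma length_swap_adj [simp]: "length (swap_adj i u) = length u"
  by (simp add: swap_adj_def)

lemma nth_swap_adj:
  "Suc i < length u \<Longrightarrow> k < length u \<Longrightarrow>
    swap_adj i u ! k = (if k = i then u ! Suc i else if k = Suc i then u ! i else u ! k)"
  by (auto simp: swap_adj_def nth_list_update)

lemma swap_adj_conv_append:
  assumes "Suc i < length u"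
  shows "u = take i u @ [u ! i, u ! Suc i] @ drop (Suc (Suc i)) u"
    and "swap_adj i u = take i u @ [u ! Suc i, u ! i] @ drop (Suc (Suc i)) u"
proof -
  show u: "u = take i u @ [u ! i, u ! Suc i] @ drop (Suc (Suc i)) u"
    using assms by (metis Cons_nth_drop_Suc Suc_lessD append_Cons append_Nil append_take_drop_id)
  show "swap_adj i u = take i u @ [u ! Suc i, u ! i] @ drop (Suc (Suc i)) u"
    using assms by (subst u) (simp add: swap_adj_def list_update_append nth_append)
qed

lemma swap_adj_append [simp]: "swap_adj (length xs) (xs @ a # b # ys) = xs @ b # a # ys"
  by (simp add: swap_adj_def list_update_append nth_append)

locale adjacent_commutation =
  fixes comm :: "nat \<Rightarrow> nat \<Rightarrow> bool"
  assumes comm_sym: "comm a b \<Longrightarrow> comm b a"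
    and comm_irrefl: "\<not> comm a a"
    and comm_trans_descending: "a < b \<Longrightarrow> b < c \<Longrightarrow> comm c b \<Longrightarrow> comm b a \<Longrightarrow> comm c a"
begin

definition sort_step :: "nat list \<Rightarrow> nat list \<Rightarrow> bool" where
  "sort_step u v \<longleftrightarrow> (\<exists>xs ys a b. b < a \<and> comm a b \<and> u = xs @ [a, b] @ ys \<and> v = xs @ [b, a] @ ys)"

definition reduced :: "nat list \<Rightarrow> bool" where
  "reduced = successively (\<lambda>a b. \<not> (b < a \<and> comm a b))"

lemma sort_step_conv_nth:
  "sort_step u v \<longleftrightarrow>
    (\<exists>i. Suc i < length u \<and> u ! Suc i < u ! i \<and> comm (u ! i) (u ! Suc i) \<and> v = swap_adj i u)"
proof
  assume "sort_step u v"
  then obtain xs ys a b where "b < a" "comm a b" "u = xs @ [a, b] @ ys" "v = xs @ [b, a] @ ys"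
    unfolding sort_step_def by blast
  then show "\<exists>i. Suc i < length u \<and> u ! Suc i < u ! i \<and> comm (u ! i) (u ! Suc i) \<and> v = swap_adj i u"
    by (intro exI[of _ "length xs"]) (simp add: nth_append)
next
  assume "\<exists>i. Suc i < length u \<and> u ! Suc i < u ! i \<and> comm (u ! i) (u ! Suc i) \<and> v = swap_adj i u"
  then show "sort_step u v"
    unfolding sort_step_def by (metis swap_adj_conv_append)
qed

lemma sort_step_swap_adj:
  "Suc i < length u \<Longrightarrow> u ! Suc i < u ! i \<Longrightarrow> comm (u ! i) (u ! Suc i) \<Longrightarrow> sort_step u (swap_adj i u)"
  unfolding sort_step_conv_nth by blast

lemma reduced_iff_normal: "reduced w \<longleftrightarrow> (\<nexists>v. sort_step w v)"
  unfolding reduced_def successively_conv_nth sort_step_conv_nth by blast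

lemma symclp_sort_step:
  "symclp sort_step u v \<longleftrightarrow> (\<exists>xs ys a b. comm a b \<and> u = xs @ [a, b] @ ys \<and> v = xs @ [b, a] @ ys)"
  unfolding symclp_def sort_step_def
  by (metis comm_irrefl comm_sym linorder_neqE_nat)

lemma sort_step_lenlex: "sort_step u v \<Longrightarrow> (v, u) \<in> lenlex less_than"
  by (auto simp: sort_step_def Cons_lenlex_iff irrefl_less_than)

lemma wfP_sort_step: "wfP sort_step\<inverse>\<inverse>"
  by (rule wfp_subset[OF wf_lenlex[OF wf_less_than, folded wfp_on_wf_on_eq]])
    (auto dest: sort_step_lenlex)

lemma sort_steps_at_join:
  assumes "i \<le> j"
    and i: "Suc i < length u" "u ! Suc i < u ! i" "comm (u ! i) (u ! Suc i)"
    and j: "Suc j < length u" "u ! Suc j < u ! j" "comm (u ! j) (u ! Suc j)"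
  shows "\<exists>z. sort_step\<^sup>*\<^sup>* (swap_adj i u) z \<and> sort_step\<^sup>*\<^sup>* (swap_adj j u) z"
proof -
  consider "j = i" | "j = Suc i" | "Suc (Suc i) \<le> j" using \<open>i \<le> j\<close> by linarith
  then show ?thesis
  proof cases
    case 1
    then show ?thesis by blast
  next
    case 2
    \<comment> \<open>Sorting the overlap \<open>c b a\<close> (\<open>a < b < c\<close>) to \<open>a b c\<close> along both routes needs \<open>comm c a\<close>.\<close>
    have ca: "comm (u ! i) (u ! Suc (Suc i))"
      using comm_trans_descending[of "u ! Suc (Suc i)" "u ! Suc i" "u ! i"] i j 2 by simp
    let ?v = "swap_adj i u" and ?w = "swap_adj (Suc i) u"
    have v1: "sort_step ?v (swap_adj (Suc i) ?v)"
      using i j 2 ca by (intro sort_step_swap_adj) (auto simp: nth_swap_adj)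
    have v2: "sort_step (swap_adj (Suc i) ?v) (swap_adj i (swap_adj (Suc i) ?v))"
      using i j 2 ca by (intro sort_step_swap_adj) (auto simp: nth_swap_adj)
    have w1: "sort_step ?w (swap_adj i ?w)"
      using i j 2 ca by (intro sort_step_swap_adj) (auto simp: nth_swap_adj)
    have w2: "sort_step (swap_adj i ?w) (swap_adj (Suc i) (swap_adj i ?w))"
      using i j 2 ca by (intro sort_step_swap_adj) (auto simp: nth_swap_adj)
    have "swap_adj i (swap_adj (Suc i) ?v) = swap_adj (Suc i) (swap_adj i ?w)"
      using i j 2 by (intro nth_equalityI) (auto simp: nth_swap_adj)
    then show ?thesis
      using v1 v2 w1 w2 2 by (metis converse_rtranclp_into_rtranclp r_into_rtranclp)
  next
    case 3
    have "sort_step (swap_adj i u) (swap_adj j (swap_adj i u))"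
      using i j 3 by (intro sort_step_swap_adj) (auto simp: nth_swap_adj)
    moreover have "sort_step (swap_adj j u) (swap_adj i (swap_adj j u))"
      using i j 3 by (intro sort_step_swap_adj) (auto simp: nth_swap_adj)
    moreover have "swap_adj j (swap_adj i u) = swap_adj i (swap_adj j u)"
      using i j 3 by (intro nth_equalityI) (auto simp: nth_swap_adj)
    ultimately show ?thesis by (metis r_into_rtranclp)
  qed
qed

lemma sort_step_local_confluent:
  "sort_step u v \<Longrightarrow> sort_step u w \<Longrightarrow> \<exists>z. sort_step\<^sup>*\<^sup>* v z \<and> sort_step\<^sup>*\<^sup>* w z"
proof -
  assume "sort_step u v" "sort_step u w"
  then obtain i j where
    i: "Suc i < length u" "u ! Suc i < u ! i" "comm (u ! i) (u ! Suc i)" "v = swap_adj i u" and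
    j: "Suc j < length u" "u ! Suc j < u ! j" "comm (u ! j) (u ! Suc j)" "w = swap_adj j u"
    unfolding sort_step_conv_nth by blast
  show ?thesis
  proof (cases "i \<le> j")
    case True
    then show ?thesis using sort_steps_at_join[of i j u] i j by blast
  next
    case False
    then show ?thesis using sort_steps_at_join[of j i u] i j by auto
  qed
qed

lemma confluentp_sort_step: "confluentp sort_step"
  using wfP_sort_step sort_step_local_confluent by (rule newman)

lemma reduced_exists: "\<exists>g. sort_step\<^sup>*\<^sup>* u g \<and> reduced g"
proof (induction u rule: wfp_induct_rule[OF wfP_sort_step])
  case (1 u)
  show ?case
  proof (cases "reduced u")
    case False
    then obtain v where "sort_step u v" by (auto simp: reduced_iff_normal)
    with "1.IH" show ?thesis by (meson conversepI converse_rtranclp_into_rtranclp)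
  qed blast
qed

lemma reduced_lenlex_least:
  assumes "reduced g" "equivclp sort_step g v" "v \<noteq> g"
  shows "(g, v) \<in> lenlex less_than"
proof -
  obtain z where "sort_step\<^sup>*\<^sup>* g z" "sort_step\<^sup>*\<^sup>* v z"
    using assms(2) semiconfluentp_equivclp[OF confluentp_imp_semiconfluentp[OF confluentp_sort_step]]
    by (auto simp: rtranclp_conversep)
  moreover from \<open>reduced g\<close> have "z = g" if "sort_step\<^sup>*\<^sup>* g z"
    using that by (metis converse_rtranclpE reduced_iff_normal)
  ultimately have "sort_step\<^sup>+\<^sup>+ v g" using \<open>v \<noteq> g\<close> by (metis rtranclpD)
  then show ?thesis
    by (induction rule: tranclp_induct)
      (blast intro: sort_step_lenlex lenlex_trans trans_less_than)+
qed

lemma equivclp_sort_step_length_set: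
  "equivclp sort_step u v \<Longrightarrow> length v = length u \<and> set v = set u"
proof (induction rule: equivclp_induct)
  case (step v w)
  have "length w = length v \<and> set w = set v"
    using step.hyps(2) unfolding sort_step_def by auto
  with step.IH show ?case by simp
qed simp

end

interpretation K: adjacent_commutation "commutes n" for n
  by unfold_locales (auto simp: commutes_def)

lemma swap_step_eq_symclp: "swap_step n = symclp (K.sort_step n)"
  by (intro ext) (simp add: swap_step_def K.symclp_sort_step)

lemma word_eq_eq_equivclp: "word_eq n = {(u, v). equivclp (K.sort_step n) u v}"
  by (simp add: word_eq_def equivclp_def swap_step_eq_symclp)

lemma equiv_word_eq: "equiv UNIV (word_eq n)"
  by (simp add: equivp_equiv word_eq_eq_equivclp)

lemma canon_eqI:
  assumes "g \<in> C" "\<And>v. v \<in> C \<Longrightarrow> v \<noteq> g \<Longrightarrow> (g, v) \<in> lenlex less_than"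
  shows "canon C = g"
  unfolding canon_def
proof (rule the_equality)
  show "g \<in> C \<and> (\<forall>v \<in> C. v \<noteq> g \<longrightarrow> (g, v) \<in> lenlex less_than)"
    using assms by blast
next
  fix w
  assume w: "w \<in> C \<and> (\<forall>v \<in> C. v \<noteq> w \<longrightarrow> (w, v) \<in> lenlex less_than)"
  show "w = g"
  proof (rule ccontr)
    assume "w \<noteq> g"
    then have "(w, g) \<in> lenlex less_than" "(g, w) \<in> lenlex less_than"
      using w assms by auto
    then have "(w, w) \<in> lenlex less_than"
      using lenlex_trans trans_less_than by blast
    then show False
      using lenlex_irreflexive[of less_than w] by simp
  qed
qed

lemma canon_class:
  assumes "K.reduced n g" "(x, g) \<in> word_eq n"
  shows "canon (word_eq n `` {x}) = g"
proof -
  have "word_eq n `` {x} = word_eq n `` {g}"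
    using equiv_class_eq[OF equiv_word_eq assms(2)] .
  moreover have "canon (word_eq n `` {g}) = g"
  proof (rule canon_eqI)
    show "g \<in> word_eq n `` {g}"
      using equiv_class_self[OF equiv_word_eq] by simp
    show "(g, v) \<in> lenlex less_than" if "v \<in> word_eq n `` {g}" "v \<noteq> g" for v
      using K.reduced_lenlex_least[OF assms(1)] that by (simp add: word_eq_eq_equivclp)
  qed
  ultimately show ?thesis by simp
qed

definition reduced_words :: "nat \<Rightarrow> nat \<Rightarrow> nat list set" where
  "reduced_words n k = {w \<in> words_of_len n k. K.reduced n w}"

lemma reduced_representative:
  assumes "x \<in> words_of_len n k"
  obtains g where "g \<in> reduced_words n k" "(x, g) \<in> word_eq n"
proof -
  obtain g where "(K.sort_step n)\<^sup>*\<^sup>* x g" "K.reduced n g"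
    using K.reduced_exists by blast
  moreover from this(1) have "equivclp (K.sort_step n) x g"
    by (rule rtranlcp_le_equivclp[THEN predicate2D])
  moreover from this have "g \<in> words_of_len n k"
    using assms K.equivclp_sort_step_length_set by (simp add: words_of_len_def)
  ultimately show ?thesis
    using that by (simp add: reduced_words_def word_eq_eq_equivclp)
qed

lemma elems_of_len_eq_image: "elems_of_len n k = (\<lambda>x. word_eq n `` {x}) ` words_of_len n k"
  unfolding elems_of_len_def quotient_def by blast

lemma bij_betw_canon: "bij_betw canon (elems_of_len n k) (reduced_words n k)"
proof (rule bij_betw_imageI)
  show "inj_on canon (elems_of_len n k)"
  proof (rule inj_onI)
    fix C D
    assume "C \<in> elems_of_len n k" "D \<in> elems_of_len n k" and eq: "canon C = canon D"
    then obtain x y where x: "x \<in> words_of_len n k" "C = word_eq n `` {x}"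
      and y: "y \<in> words_of_len n k" "D = word_eq n `` {y}"
      unfolding elems_of_len_eq_image by blast
    obtain g h where g: "g \<in> reduced_words n k" "(x, g) \<in> word_eq n"
      and h: "h \<in> reduced_words n k" "(y, h) \<in> word_eq n"
      using reduced_representative[OF x(1)] reduced_representative[OF y(1)] by metis
    have "g = h"
      using eq x(2) y(2) canon_class[of n g x] canon_class[of n h y] g h
      by (simp add: reduced_words_def)
    then show "C = D"
      using x(2) y(2) g(2) h(2) equiv_class_eq[OF equiv_word_eq] by metis
  qed
  show "canon ` elems_of_len n k = reduced_words n k"
  proof (intro equalityI subsetI)
    fix w
    assume "w \<in> canon ` elems_of_len n k"
    then obtain x where x: "x \<in> words_of_len n k" "w = canon (word_eq n `` {x})"
      unfolding elems_of_len_eq_image by blast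
    obtain g where g: "g \<in> reduced_words n k" "(x, g) \<in> word_eq n"
      using reduced_representative[OF x(1)] by blast
    then show "w \<in> reduced_words n k"
      using x(2) canon_class[of n g x] by (simp add: reduced_words_def)
  next
    fix g
    assume g: "g \<in> reduced_words n k"
    then have "canon (word_eq n `` {g}) = g"
      using canon_class equiv_class_self[OF equiv_word_eq] by (simp add: reduced_words_def)
    moreover have "word_eq n `` {g} \<in> elems_of_len n k"
      using g unfolding elems_of_len_eq_image reduced_words_def by blast
    ultimately show "g \<in> canon ` elems_of_len n k"
      by (metis image_eqI)
  qed
qed

definition reduced_words_from :: "nat \<Rightarrow> nat \<Rightarrow> nat \<Rightarrow> nat list set" where
  "reduced_words_from n k i = {w \<in> reduced_words n k. w \<noteq> [] \<and> hd w = i}"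

lemma cnt_eq_card: "cnt n k = card (reduced_words n k)"
  unfolding cnt_def by (rule bij_betw_same_card[OF bij_betw_canon])

lemma cnt_start_eq_card: "cnt_start n k i = card (reduced_words_from n k i)"
proof -
  have "bij_betw canon {C \<in> elems_of_len n k. canon C \<noteq> [] \<and> hd (canon C) = i} (reduced_words_from n k i)"
    using bij_betw_canon[of n k]
  proof (rule bij_betw_subset)
    have "canon ` {C \<in> elems_of_len n k. canon C \<noteq> [] \<and> hd (canon C) = i}
        = {w \<in> canon ` elems_of_len n k. w \<noteq> [] \<and> hd w = i}"
      by (auto intro: image_eqI)
    then show "canon ` {C \<in> elems_of_len n k. canon C \<noteq> [] \<and> hd (canon C) = i} = reduced_words_from n k i"
      using bij_betw_imp_surj_on[OF bij_betw_canon, of n k] by (simp add: reduced_words_from_def)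
  qed blast
  then show ?thesis
    unfolding cnt_start_def by (rule bij_betw_same_card)
qed

lemma finite_reduced_words: "finite (reduced_words n k)"
proof -
  have "finite (words_of_len n k)"
    unfolding words_of_len_def by (rule finite_lists_length_eq) simp
  then show ?thesis
    unfolding reduced_words_def by simp
qed

lemma reduced_words_0: "reduced_words n 0 = {[]}"
  by (auto simp: reduced_words_def words_of_len_def K.reduced_def)

lemma reduced_words_from_1: "i \<in> {1..n} \<Longrightarrow> reduced_words_from n 1 i = {[i]}"
  by (auto simp: reduced_words_from_def reduced_words_def words_of_len_def K.reduced_def length_Suc_conv)

lemma card_reduced_words:
  assumes "k \<ge> 1"
  shows "card (reduced_words n k) = (\<Sum>i = 1..n. card (reduced_words_from n k i))"
proof -
  have union: "reduced_words n k = (\<Union>i \<in> {1..n}. reduced_words_from n k i)"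
  proof (intro equalityI subsetI)
    fix w
    assume w: "w \<in> reduced_words n k"
    then have "w \<noteq> []" "set w \<subseteq> {1..n}"
      using assms by (auto simp: reduced_words_def words_of_len_def)
    then have "hd w \<in> {1..n}"
      using hd_in_set by blast
    with w \<open>w \<noteq> []\<close> show "w \<in> (\<Union>i \<in> {1..n}. reduced_words_from n k i)"
      by (auto simp: reduced_words_from_def)
  qed (auto simp: reduced_words_from_def)
  have "card (\<Union>i \<in> {1..n}. reduced_words_from n k i) = (\<Sum>i = 1..n. card (reduced_words_from n k i))"
    by (rule card_UN_disjoint) (auto simp: finite_reduced_words reduced_words_from_def)
  with union show ?thesis
    by simp
qed

definition followers :: "nat \<Rightarrow> nat \<Rightarrow> nat set" where
  "followers n j = {i \<in> {1..n}. \<not> (i < j \<and> commutes n j i)}"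

lemma reduced_words_from_Suc:
  assumes "k \<ge> 1" "j \<in> {1..n}"
  shows "reduced_words_from n (Suc k) j = Cons j ` (\<Union>i \<in> followers n j. reduced_words_from n k i)"
proof (intro equalityI subsetI)
  fix w
  assume w: "w \<in> reduced_words_from n (Suc k) j"
  then obtain v where v: "w = j # v" "length v = k" "set v \<subseteq> {1..n}" "K.reduced n (j # v)"
    by (auto simp: reduced_words_from_def reduced_words_def words_of_len_def neq_Nil_conv)
  with assms have "v \<noteq> []"
    by auto
  with v(3) have "hd v \<in> {1..n}"
    using hd_in_set by blast
  with v \<open>v \<noteq> []\<close> have "hd v \<in> followers n j" "v \<in> reduced_words_from n k (hd v)"
    by (auto simp: followers_def reduced_words_from_def reduced_words_def words_of_len_def
        K.reduced_def successively_Cons)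
  with v(1) show "w \<in> Cons j ` (\<Union>i \<in> followers n j. reduced_words_from n k i)"
    by blast
next
  fix w
  assume "w \<in> Cons j ` (\<Union>i \<in> followers n j. reduced_words_from n k i)"
  then obtain i v where "w = j # v" "i \<in> followers n j" "v \<in> reduced_words_from n k i"
    by blast
  then show "w \<in> reduced_words_from n (Suc k) j"
    using assms
    by (auto simp: followers_def reduced_words_from_def reduced_words_def words_of_len_def
        K.reduced_def successively_Cons)
qed

lemma card_reduced_words_from_Suc:
  assumes "k \<ge> 1" "j \<in> {1..n}"
  shows "card (reduced_words_from n (Suc k) j) = (\<Sum>i \<in> followers n j. card (reduced_words_from n k i))"
  unfolding reduced_words_from_Suc[OF assms] card_image[OF inj_on_Cons1]
  by (rule card_UN_disjoint)
    (auto simp: followers_def reduced_words_from_def finite_reduced_words)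

lemma followers_eq:
  assumes "n \<ge> 3" "j \<in> {1..n}"
  shows "followers n j = (if j = n then {n - 2..n} else {max 1 (j - 1)..n})"
  using assms by (auto simp: followers_def commutes_def)

theorem corollary2:
  fixes n :: nat
  assumes "n \<ge> 3"
  shows "cnt n 0 = 1
    \<and> (\<forall>i \<in> {1..n}. cnt_start n 1 i = 1)
    \<and> (\<forall>k \<ge> 1. cnt n k = (\<Sum>i = 1..n. cnt_start n k i))
    \<and> (\<forall>k \<ge> 2. \<forall>j \<in> {1..n}. j \<noteq> n \<longrightarrow>
          cnt_start n k j = (\<Sum>i = max 1 (j - 1)..n. cnt_start n (k - 1) i))
    \<and> (\<forall>k \<ge> 2. cnt_start n k n = (\<Sum>i = n - 2..n. cnt_start n (k - 1) i))"
proof -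
  have step: "cnt_start n k j = (\<Sum>i \<in> followers n j. cnt_start n (k - 1) i)"
    if "k \<ge> 2" "j \<in> {1..n}" for k j
    using card_reduced_words_from_Suc[of "k - 1" j n] that
    by (simp add: cnt_start_eq_card Suc_diff_le)
  have "n \<in> {1..n}"
    using assms by simp
  then show ?thesis
    using step followers_eq[OF assms] reduced_words_from_1[of _ n]
    by (simp add: cnt_eq_card cnt_start_eq_card reduced_words_0 card_reduced_words)
qed

end
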